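(* Let $k$ be a commutative ring and $H$ a Hopf algebra over $k$, finitely generated projective as a $k$-module, with counit $\epsilon$. Let $P$ be an invertible $k$-module, $Q=P^*$, and let $\psi:H\to P$ be a Frobenius homomorphism satisfying $\sum a_{(1)}\otimes\psi(a_{(2)})=1_H\otimes\psi(a)$ for all $a\in H$, with left norm $N=\sum_iN_i\otimes q_i\in H\otimes Q$. Then $H$ is a separable $k$-algebra if and only if the element $\sum_i\epsilon(N_i)q_i\in Q$ is Morita-invertible.
   Context: $\psi$ is a Frobenius homomorphism means that $x\mapsto(y\mapsto\psi(yx))$ is a bijection $H\to\mathrm{Hom}_k(H,P)$. The left norm of $\psi$ is the unique $N=\sum_iN_i\otimes q_i\in H\otimes Q$ with $\sum_i q_i(\psi(aN_i))=\epsilon(a)$ for all $a\in H$. An element $q\in Q$ is Morita-invertible if there is $p\in P$ with $q(p)=1_k$. *)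

theory Defs
  imports Complex_Main "HOL-Library.Function_Algebras"
begin

text \<open>A formal k-linear combination of elements of a type 'a is a function 'a => 'k
  (with finite support). Tensor products M (x) N are realised as formal combinations of
  pairs modulo the k-span of the bilinearity relations (the usual construction).\<close>

definition fsupp :: "('a \<Rightarrow> 'k::zero) \<Rightarrow> 'a set" where
  "fsupp c = {x. c x \<noteq> 0}"

definition fs_delta :: "'a \<Rightarrow> ('a \<Rightarrow> 'k::{zero,one})" where
  "fs_delta a = (\<lambda>x. if x = a then 1 else 0)"

definition fs_scale :: "'k::times \<Rightarrow> ('a \<Rightarrow> 'k) \<Rightarrow> ('a \<Rightarrow> 'k)" where
  "fs_scale r c = (\<lambda>x. r * c x)"

definition kspan :: "('a \<Rightarrow> 'k::comm_ring_1) set \<Rightarrow> ('a \<Rightarrow> 'k) set" where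
  "kspan R = {f. \<exists>S c. finite S \<and> S \<subseteq> R \<and> f = (\<Sum>r\<in>S. fs_scale (c r) r)}"

definition tens_rel ::
  "('k::comm_ring_1 \<Rightarrow> 'm::ab_group_add \<Rightarrow> 'm) \<Rightarrow> ('k \<Rightarrow> 'n::ab_group_add \<Rightarrow> 'n)
   \<Rightarrow> 'm set \<Rightarrow> 'n set \<Rightarrow> ('m \<times> 'n \<Rightarrow> 'k) set" where
  "tens_rel sM sN M N =
     {fs_delta (m + m', n) - fs_delta (m, n) - fs_delta (m', n) | m m' n. m \<in> M \<and> m' \<in> M \<and> n \<in> N}
   \<union> {fs_delta (m, n + n') - fs_delta (m, n) - fs_delta (m, n') | m n n'. m \<in> M \<and> n \<in> N \<and> n' \<in> N}
   \<union> {fs_delta (sM r m, n) - fs_scale r (fs_delta (m, n)) | r m n. m \<in> M \<and> n \<in> N}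
   \<union> {fs_delta (m, sN r n) - fs_scale r (fs_delta (m, n)) | r m n. m \<in> M \<and> n \<in> N}"

definition teq ::
  "('k::comm_ring_1 \<Rightarrow> 'm::ab_group_add \<Rightarrow> 'm) \<Rightarrow> ('k \<Rightarrow> 'n::ab_group_add \<Rightarrow> 'n)
   \<Rightarrow> 'm set \<Rightarrow> 'n set \<Rightarrow> ('m \<times> 'n \<Rightarrow> 'k) \<Rightarrow> ('m \<times> 'n \<Rightarrow> 'k) \<Rightarrow> bool" where
  "teq sM sN M N c d \<longleftrightarrow> c - d \<in> kspan (tens_rel sM sN M N)"

definition tens3_rel ::
  "('k::comm_ring_1 \<Rightarrow> 'h::ab_group_add \<Rightarrow> 'h) \<Rightarrow> ('h \<times> 'h \<times> 'h \<Rightarrow> 'k) set" where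
  "tens3_rel s =
     {fs_delta (x + x', y, z) - fs_delta (x, y, z) - fs_delta (x', y, z) | x x' y z. True}
   \<union> {fs_delta (x, y + y', z) - fs_delta (x, y, z) - fs_delta (x, y', z) | x y y' z. True}
   \<union> {fs_delta (x, y, z + z') - fs_delta (x, y, z) - fs_delta (x, y, z') | x y z z'. True}
   \<union> {fs_delta (s r x, y, z) - fs_scale r (fs_delta (x, y, z)) | r x y z. True}
   \<union> {fs_delta (x, s r y, z) - fs_scale r (fs_delta (x, y, z)) | r x y z. True}
   \<union> {fs_delta (x, y, s r z) - fs_scale r (fs_delta (x, y, z)) | r x y z. True}"

definition teq3 ::
  "('k::comm_ring_1 \<Rightarrow> 'h::ab_group_add \<Rightarrow> 'h) \<Rightarrow> ('h \<times> 'h \<times> 'h \<Rightarrow> 'k) \<Rightarrow> ('h \<times> 'h \<times> 'h \<Rightarrow> 'k) \<Rightarrow> bool" where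
  "teq3 s c d \<longleftrightarrow> c - d \<in> kspan (tens3_rel s)"

text \<open>(f (x) g) applied to a formal sum of pairs.\<close>
definition tmap :: "('a \<Rightarrow> 'c) \<Rightarrow> ('b \<Rightarrow> 'd) \<Rightarrow> ('a \<times> 'b \<Rightarrow> 'k::comm_ring_1) \<Rightarrow> ('c \<times> 'd \<Rightarrow> 'k)" where
  "tmap f g c = (\<lambda>(u, v). \<Sum>(x, y)\<in>{(x, y). c (x, y) \<noteq> 0 \<and> f x = u \<and> g y = v}. c (x, y))"

text \<open>Product in the algebra H (x) H.\<close>
definition tmult :: "('h::times \<times> 'h \<Rightarrow> 'k::comm_ring_1) \<Rightarrow> ('h \<times> 'h \<Rightarrow> 'k) \<Rightarrow> ('h \<times> 'h \<Rightarrow> 'k)" where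
  "tmult c d = (\<lambda>(u, v). \<Sum>((x, y), (x', y'))\<in>{((x, y), (x', y')). c (x, y) \<noteq> 0 \<and> d (x', y') \<noteq> 0
                   \<and> x * x' = u \<and> y * y' = v}. c (x, y) * d (x', y'))"

definition k_algebra :: "('k::comm_ring_1 \<Rightarrow> 'h::ring_1 \<Rightarrow> 'h) \<Rightarrow> bool" where
  "k_algebra s \<longleftrightarrow> module s \<and> (\<forall>r x y. s r (x * y) = s r x * y \<and> s r (x * y) = x * s r y)"

text \<open>Finitely generated projective k-module: direct summand of some k^n
  (equivalently, a finite dual basis).\<close>
definition fg_projective :: "('k::comm_ring_1 \<Rightarrow> 'm::ab_group_add \<Rightarrow> 'm) \<Rightarrow> bool" where
  "fg_projective s \<longleftrightarrow> module s \<and>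
     (\<exists>(n::nat) (e::nat \<Rightarrow> 'm) (f::nat \<Rightarrow> 'm \<Rightarrow> 'k).
        (\<forall>i<n. module_hom s (*) (f i)) \<and> (\<forall>x. x = (\<Sum>i<n. s (f i x) (e i))))"

text \<open>Hopf algebra over k with comultiplication D (values: formal sums representing
  elements of H (x) H), counit eps and antipode S.\<close>
definition hopf_algebra ::
  "('k::comm_ring_1 \<Rightarrow> 'h::ring_1 \<Rightarrow> 'h) \<Rightarrow> ('h \<Rightarrow> ('h \<times> 'h \<Rightarrow> 'k)) \<Rightarrow> ('h \<Rightarrow> 'k) \<Rightarrow> ('h \<Rightarrow> 'h) \<Rightarrow> bool" where
  "hopf_algebra s D eps S \<longleftrightarrow>
     k_algebra s
   \<comment> \<open>comultiplication: well-defined k-linear algebra map H -> H (x) H\<close>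
   \<and> (\<forall>a. finite (fsupp (D a)))
   \<and> (\<forall>a b. teq s s UNIV UNIV (D (a + b)) (D a + D b))
   \<and> (\<forall>r a. teq s s UNIV UNIV (D (s r a)) (fs_scale r (D a)))
   \<and> (\<forall>a b. teq s s UNIV UNIV (D (a * b)) (tmult (D a) (D b)))
   \<and> teq s s UNIV UNIV (D 1) (fs_delta (1, 1))
   \<comment> \<open>coassociativity (D (x) id) o D = (id (x) D) o D in H (x) H (x) H\<close>
   \<and> (\<forall>a. teq3 s
          (\<lambda>(u, v, w). \<Sum>x\<in>{x. D a (x, w) \<noteq> 0}. D a (x, w) * D x (u, v))
          (\<lambda>(u, v, w). \<Sum>y\<in>{y. D a (u, y) \<noteq> 0}. D a (u, y) * D y (v, w)))
   \<comment> \<open>counit: k-linear algebra map with (eps (x) id) o D = id = (id (x) eps) o D\<close>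
   \<and> module_hom s (*) eps
   \<and> (\<forall>a b. eps (a * b) = eps a * eps b) \<and> eps 1 = 1
   \<and> (\<forall>a. (\<Sum>(x, y)\<in>fsupp (D a). s (D a (x, y) * eps x) y) = a)
   \<and> (\<forall>a. (\<Sum>(x, y)\<in>fsupp (D a). s (D a (x, y) * eps y) x) = a)
   \<comment> \<open>antipode\<close>
   \<and> module_hom s s S
   \<and> (\<forall>a. (\<Sum>(x, y)\<in>fsupp (D a). s (D a (x, y)) (S x * y)) = s (eps a) 1)
   \<and> (\<forall>a. (\<Sum>(x, y)\<in>fsupp (D a). s (D a (x, y)) (x * S y)) = s (eps a) 1)"

text \<open>Separable k-algebra: there is a separability idempotent e in H (x) H,
  i.e. mu(e) = 1 and (a (x) 1) e = e (1 (x) a) for all a.\<close>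
definition separable_algebra :: "('k::comm_ring_1 \<Rightarrow> 'h::ring_1 \<Rightarrow> 'h) \<Rightarrow> bool" where
  "separable_algebra s \<longleftrightarrow>
     (\<exists>e :: 'h \<times> 'h \<Rightarrow> 'k. finite (fsupp e)
        \<and> (\<Sum>(x, y)\<in>fsupp e. s (e (x, y)) (x * y)) = 1
        \<and> (\<forall>a. teq s s UNIV UNIV (tmap (\<lambda>x. a * x) id e) (tmap id (\<lambda>y. y * a) e)))"

definition kdual :: "('k::comm_ring_1 \<Rightarrow> 'p::ab_group_add \<Rightarrow> 'p) \<Rightarrow> ('p \<Rightarrow> 'k) set" where
  "kdual s = {q. module_hom s (*) q}"

definition fun_scale :: "'k::comm_ring_1 \<Rightarrow> ('p \<Rightarrow> 'k) \<Rightarrow> ('p \<Rightarrow> 'k)" where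
  "fun_scale r q = (\<lambda>x. r * q x)"

text \<open>Invertible k-module: f.g. projective and the evaluation map P (x) P^* -> k is an
  isomorphism (so P^* is an inverse of P in the Picard group).\<close>
definition invertible_module :: "('k::comm_ring_1 \<Rightarrow> 'p::ab_group_add \<Rightarrow> 'p) \<Rightarrow> bool" where
  "invertible_module s \<longleftrightarrow> fg_projective s
     \<and> (\<exists>c :: 'p \<times> ('p \<Rightarrow> 'k) \<Rightarrow> 'k. finite (fsupp c) \<and> fsupp c \<subseteq> UNIV \<times> kdual s
          \<and> (\<Sum>(p, q)\<in>fsupp c. c (p, q) * q p) = 1)
     \<and> (\<forall>c :: 'p \<times> ('p \<Rightarrow> 'k) \<Rightarrow> 'k. finite (fsupp c) \<and> fsupp c \<subseteq> UNIV \<times> kdual s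
          \<and> (\<Sum>(p, q)\<in>fsupp c. c (p, q) * q p) = 0
          \<longrightarrow> teq s fun_scale UNIV (kdual s) c 0)"

definition frobenius_hom ::
  "('k::comm_ring_1 \<Rightarrow> 'h::ring_1 \<Rightarrow> 'h) \<Rightarrow> ('k \<Rightarrow> 'p::ab_group_add \<Rightarrow> 'p) \<Rightarrow> ('h \<Rightarrow> 'p) \<Rightarrow> bool" where
  "frobenius_hom sH sP psi \<longleftrightarrow> module_hom sH sP psi
     \<and> bij_betw (\<lambda>x. \<lambda>y. psi (y * x)) UNIV {f. module_hom sH sP f}"

definition left_norm ::
  "('k::comm_ring_1 \<Rightarrow> 'h::ring_1 \<Rightarrow> 'h) \<Rightarrow> ('k \<Rightarrow> 'p::ab_group_add \<Rightarrow> 'p) \<Rightarrow> ('h \<Rightarrow> 'k)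
   \<Rightarrow> ('h \<Rightarrow> 'p) \<Rightarrow> ('h \<times> ('p \<Rightarrow> 'k) \<Rightarrow> 'k) \<Rightarrow> bool" where
  "left_norm sH sP eps psi N \<longleftrightarrow> finite (fsupp N) \<and> fsupp N \<subseteq> UNIV \<times> kdual sP
     \<and> (\<forall>a. (\<Sum>(h, q)\<in>fsupp N. N (h, q) * q (psi (a * h))) = eps a)
     \<and> (\<forall>N'. finite (fsupp N') \<and> fsupp N' \<subseteq> UNIV \<times> kdual sP
          \<and> (\<forall>a. (\<Sum>(h, q)\<in>fsupp N'. N' (h, q) * q (psi (a * h))) = eps a)
          \<longrightarrow> teq sH fun_scale UNIV (kdual sP) N' N)"

definition morita_invertible :: "('k::comm_ring_1 \<Rightarrow> 'p::ab_group_add \<Rightarrow> 'p) \<Rightarrow> ('p \<Rightarrow> 'k) \<Rightarrow> bool" where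
  "morita_invertible sP q \<longleftrightarrow> q \<in> kdual sP \<and> (\<exists>p. q p = 1)"

end

theory Submission
  imports Defs
begin

text \<open>Separability of \<open>H\<close> is governed by its integrals. A separability idempotent \<open>e\<close>
  yields the right integral \<open>(\<epsilon> \<otimes> id) e\<close> of counit 1; conversely, a left integral
  \<open>t\<close> with \<open>\<epsilon>(t) = 1\<close> gives the separability idempotent \<open>t\<^sub>1 \<otimes> S(t\<^sub>2)\<close>, whose
  centrality rests on \<open>S\<close> being anti-multiplicative.

  The left norm \<open>N = \<Sum> N\<^sub>i \<otimes> q\<^sub>i\<close> translates between integrals and
  \<open>q\<^sub>0 = \<Sum> \<epsilon>(N\<^sub>i) q\<^sub>i\<close>. For a right integral \<open>t\<close> with \<open>\<epsilon>(t) = 1\<close> the norm identity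
  at \<open>a = t\<close> reads \<open>q\<^sub>0(\<psi> t) = 1\<close>. If \<open>q\<^sub>0(p) = 1\<close>, then \<open>t = \<Sum> q\<^sub>i(p) N\<^sub>i\<close>
  has \<open>\<epsilon>(t) = 1\<close> and is a left integral, because multiplying the first factor of \<open>N\<close> by an
  element of counit 1 produces another left norm, which by uniqueness equals \<open>N\<close>.\<close>

lemma sum_apply_fun: "(\<Sum>i\<in>I. f i) x = (\<Sum>i\<in>I. f i x)"
  by (induct I rule: infinite_finite_induct) auto

lemma module_mult: "module ((*) :: 'k::comm_ring_1 \<Rightarrow> 'k \<Rightarrow> 'k)"
  by unfold_locales (simp_all add: algebra_simps)

lemma module_fs: "module (fs_scale :: 'k::comm_ring_1 \<Rightarrow> ('a \<Rightarrow> 'k) \<Rightarrow> _)"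
  by unfold_locales (simp_all add: fs_scale_def algebra_simps fun_eq_iff)

lemma kspan_span: "kspan R = module.span fs_scale R"
  unfolding kspan_def module.span_explicit[OF module_fs] by auto

lemma fs_scale_sum: "fs_scale (r::'k::comm_ring_1) (\<Sum>i\<in>I. f i) = (\<Sum>i\<in>I. fs_scale r (f i))"
  by (simp add: fs_scale_def fun_eq_iff sum_apply_fun sum_distrib_left)

lemma teq_refl: "teq sM sN M N c c"
  unfolding teq_def kspan_span using module.span_zero[OF module_fs] by simp

lemma teq_sym: "teq sM sN M N c d \<Longrightarrow> teq sM sN M N d c"
  unfolding teq_def kspan_span using module.span_neg[OF module_fs] by fastforce

lemma teq_trans[trans]: "teq sM sN M N c d \<Longrightarrow> teq sM sN M N d e \<Longrightarrow> teq sM sN M N c e"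
proof -
  assume a: "teq sM sN M N c d" "teq sM sN M N d e"
  have "c - e = (c - d) + (d - e)" by simp
  then show ?thesis using a module.span_add[OF module_fs] unfolding teq_def kspan_span by metis
qed

lemma teq_add: "teq sM sN M N c c' \<Longrightarrow> teq sM sN M N d d' \<Longrightarrow> teq sM sN M N (c + d) (c' + d')"
proof -
  assume a: "teq sM sN M N c c'" "teq sM sN M N d d'"
  have "(c + d) - (c' + d') = (c - c') + (d - d')" by simp
  then show ?thesis using a module.span_add[OF module_fs] unfolding teq_def kspan_span by metis
qed

lemma teq_scale: "teq sM sN M N c c' \<Longrightarrow> teq sM sN M N (fs_scale r c) (fs_scale r c')"
  unfolding teq_def kspan_span using module.span_scale[OF module_fs]
  by (metis module.scale_right_diff_distrib module_fs)

lemma teq_sum: "(\<And>i. i \<in> I \<Longrightarrow> teq sM sN M N (c i) (d i)) \<Longrightarrow> teq sM sN M N (\<Sum>i\<in>I. c i) (\<Sum>i\<in>I. d i)"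
  by (induct I rule: infinite_finite_induct) (auto intro: teq_refl teq_add)

lemma teq_if_diff_tens_rel: "c - d \<in> tens_rel sM sN M N \<Longrightarrow> teq sM sN M N c d"
  unfolding teq_def kspan_span by (rule module.span_base[OF module_fs])

lemma teq_delta_add_left: "m \<in> M \<Longrightarrow> m' \<in> M \<Longrightarrow> n \<in> N \<Longrightarrow>
   teq sM sN M N (fs_delta (m + m', n)) (fs_delta (m, n) + fs_delta (m', n))"
  by (rule teq_if_diff_tens_rel) (unfold tens_rel_def diff_diff_eq[symmetric], blast)

lemma teq_delta_add_right: "m \<in> M \<Longrightarrow> n \<in> N \<Longrightarrow> n' \<in> N \<Longrightarrow>
   teq sM sN M N (fs_delta (m, n + n')) (fs_delta (m, n) + fs_delta (m, n'))"
  by (rule teq_if_diff_tens_rel) (unfold tens_rel_def diff_diff_eq[symmetric], blast)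

lemma teq_delta_scale_left: "m \<in> M \<Longrightarrow> n \<in> N \<Longrightarrow>
   teq sM sN M N (fs_delta (sM r m, n)) (fs_scale r (fs_delta (m, n)))"
  by (rule teq_if_diff_tens_rel) (unfold tens_rel_def, blast)

lemma teq_delta_scale_right: "m \<in> M \<Longrightarrow> n \<in> N \<Longrightarrow>
   teq sM sN M N (fs_delta (m, sN r n)) (fs_scale r (fs_delta (m, n)))"
  by (rule teq_if_diff_tens_rel) (unfold tens_rel_def, blast)

definition fs_eval :: "('k::comm_ring_1 \<Rightarrow> 'm::ab_group_add \<Rightarrow> 'm) \<Rightarrow> ('a \<Rightarrow> 'm) \<Rightarrow> ('a \<Rightarrow> 'k) \<Rightarrow> 'm" where
  "fs_eval sc F c = (\<Sum>x\<in>fsupp c. sc (c x) (F x))"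

lemma fsupp_add: "fsupp ((c::'a\<Rightarrow>'k::comm_ring_1) + d) \<subseteq> fsupp c \<union> fsupp d"
  by (auto simp: fsupp_def)
lemma fsupp_diff: "fsupp ((c::'a\<Rightarrow>'k::comm_ring_1) - d) \<subseteq> fsupp c \<union> fsupp d"
  by (auto simp: fsupp_def)
lemma fsupp_scale: "fsupp (fs_scale r (c::'a\<Rightarrow>'k::comm_ring_1)) \<subseteq> fsupp c"
  by (auto simp: fsupp_def fs_scale_def)
lemma fsupp_delta: "fsupp (fs_delta a :: 'a \<Rightarrow> 'k::zero_neq_one) = {a}"
  by (auto simp: fsupp_def fs_delta_def)
lemma fsupp_zero[simp]: "fsupp 0 = {}"
  by (auto simp: fsupp_def)
lemma fsupp_zero'[simp]: "fsupp (\<lambda>_. 0) = {}"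
  by (auto simp: fsupp_def)

lemma finite_fsupp_add: "finite (fsupp (c::'a\<Rightarrow>'k::comm_ring_1)) \<Longrightarrow> finite (fsupp d) \<Longrightarrow> finite (fsupp (c + d))"
  by (meson finite_UnI finite_subset fsupp_add)
lemma finite_fsupp_diff: "finite (fsupp (c::'a\<Rightarrow>'k::comm_ring_1)) \<Longrightarrow> finite (fsupp d) \<Longrightarrow> finite (fsupp (c - d))"
  by (meson finite_UnI finite_subset fsupp_diff)
lemma finite_fsupp_scale: "finite (fsupp (c::'a\<Rightarrow>'k::comm_ring_1)) \<Longrightarrow> finite (fsupp (fs_scale r c))"
  by (meson finite_subset fsupp_scale)
lemma finite_fsupp_delta: "finite (fsupp (fs_delta a :: 'a \<Rightarrow> 'k::zero_neq_one))"
  by (simp add: fsupp_delta)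
lemma finite_fsupp_sum: "(\<And>i. i \<in> I \<Longrightarrow> finite (fsupp (c i :: 'a\<Rightarrow>'k::comm_ring_1))) \<Longrightarrow> finite (fsupp (\<Sum>i\<in>I. c i))"
  by (induct I rule: infinite_finite_induct) (auto intro: finite_fsupp_add)

lemmas finite_fsupp_intros = finite_fsupp_add finite_fsupp_diff finite_fsupp_scale finite_fsupp_delta
  finite_fsupp_sum

lemma fs_eval_superset:
  assumes "module sc" "finite A" "fsupp c \<subseteq> A"
  shows "fs_eval sc F c = (\<Sum>x\<in>A. sc (c x) (F x))"
  unfolding fs_eval_def using assms
  by (intro sum.mono_neutral_left) (auto simp: fsupp_def module.scale_zero_left)

lemma fs_eval_add:
  assumes "module sc" "finite (fsupp c)" "finite (fsupp d)"
  shows "fs_eval sc F (c + d) = fs_eval sc F c + fs_eval sc F d"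
proof -
  let ?A = "fsupp c \<union> fsupp d"
  have "fs_eval sc F (c + d) = (\<Sum>x\<in>?A. sc ((c + d) x) (F x))"
    by (rule fs_eval_superset[OF assms(1)]) (use assms fsupp_add[of c d] in auto)
  also have "\<dots> = (\<Sum>x\<in>?A. sc (c x) (F x)) + (\<Sum>x\<in>?A. sc (d x) (F x))"
    by (simp add: module.scale_left_distrib[OF assms(1)] sum.distrib)
  also have "\<dots> = fs_eval sc F c + fs_eval sc F d"
    using fs_eval_superset[OF assms(1), of ?A c F] fs_eval_superset[OF assms(1), of ?A d F] assms by auto
  finally show ?thesis .
qed

lemma fs_eval_diff:
  assumes "module sc" "finite (fsupp c)" "finite (fsupp d)"
  shows "fs_eval sc F (c - d) = fs_eval sc F c - fs_eval sc F d"
proof -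
  let ?A = "fsupp c \<union> fsupp d"
  have "fs_eval sc F (c - d) = (\<Sum>x\<in>?A. sc ((c - d) x) (F x))"
    by (rule fs_eval_superset[OF assms(1)]) (use assms fsupp_diff[of c d] in auto)
  also have "\<dots> = (\<Sum>x\<in>?A. sc (c x) (F x)) - (\<Sum>x\<in>?A. sc (d x) (F x))"
    by (simp add: module.scale_left_diff_distrib[OF assms(1)] sum_subtractf)
  also have "\<dots> = fs_eval sc F c - fs_eval sc F d"
    using fs_eval_superset[OF assms(1), of ?A c F] fs_eval_superset[OF assms(1), of ?A d F] assms by auto
  finally show ?thesis .
qed

lemma fs_eval_scale:
  assumes "module sc" "finite (fsupp c)"
  shows "fs_eval sc F (fs_scale r c) = sc r (fs_eval sc F c)"
proof -
  have "fs_eval sc F (fs_scale r c) = (\<Sum>x\<in>fsupp c. sc (fs_scale r c x) (F x))"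
    by (rule fs_eval_superset[OF assms(1)]) (use assms fsupp_scale[of r c] in auto)
  also have "\<dots> = sc r (fs_eval sc F c)"
    by (simp add: fs_eval_def fs_scale_def module.scale_sum_right[OF assms(1)] module.scale_scale[OF assms(1)])
  finally show ?thesis .
qed

lemma fs_eval_delta:
  assumes "module sc"
  shows "fs_eval sc F (fs_delta a) = F a"
  unfolding fs_eval_def fsupp_delta by (simp add: fs_delta_def module.scale_one[OF assms])

lemma fs_eval_fun_scale:
  assumes "module sc"
  shows "fs_eval sc (\<lambda>x. sc r (F x)) c = sc r (fs_eval sc F c)"
  by (simp add: fs_eval_def module.scale_sum_right[OF assms] module.scale_left_commute[OF assms])

lemma fs_eval_cong: "(\<And>x. x \<in> fsupp c \<Longrightarrow> F x = G x) \<Longrightarrow> fs_eval sc F c = fs_eval sc G c"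
  by (simp add: fs_eval_def)

lemma fs_eval_hom:
  assumes "module_hom s1 s2 L"
  shows "L (fs_eval s1 F c) = fs_eval s2 (\<lambda>x. L (F x)) c"
  by (simp add: fs_eval_def module_hom.sum[OF assms] module_hom.scale[OF assms])

lemma fs_eval_push:
  assumes "module sc" "finite A" "\<And>z. c z = (\<Sum>i\<in>{i\<in>A. h i = z}. w i)"
  shows "fs_eval sc F c = (\<Sum>i\<in>A. sc (w i) (F (h i)))"
proof -
  have sub: "fsupp c \<subseteq> h ` A"
  proof
    fix z assume "z \<in> fsupp c"
    then have "(\<Sum>i\<in>{i\<in>A. h i = z}. w i) \<noteq> 0" using assms(3) by (simp add: fsupp_def)
    then obtain i where "i \<in> A" "h i = z" by (metis (mono_tags, lifting) empty_Collect_eq sum.empty)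
    then show "z \<in> h ` A" by blast
  qed
  have "fs_eval sc F c = (\<Sum>z\<in>h ` A. sc (c z) (F z))"
    using assms sub by (intro fs_eval_superset) auto
  also have "\<dots> = (\<Sum>z\<in>h ` A. \<Sum>i\<in>{i\<in>A. h i = z}. sc (w i) (F (h i)))"
    by (intro sum.cong refl) (auto simp: assms(3) module.scale_sum_left[OF assms(1)])
  also have "\<dots> = (\<Sum>i\<in>A. sc (w i) (F (h i)))"
    using assms(2) by (rule sum.image_gen[symmetric])
  finally show ?thesis .
qed

lemma tmap_push: "tmap f g c z = (\<Sum>i\<in>{i \<in> fsupp c. (\<lambda>(x, y). (f x, g y)) i = z}. c i)"
proof -
  obtain u v where z: "z = (u, v)" by (cases z)
  show ?thesis
    unfolding z tmap_def prod.case by (rule sum.cong) (auto simp: fsupp_def)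
qed

lemma fs_eval_tmap:
  assumes "module sc" "finite (fsupp c)"
  shows "fs_eval sc F (tmap f g c) = fs_eval sc (\<lambda>(x, y). F (f x, g y)) c"
proof -
  have "fs_eval sc F (tmap f g c) = (\<Sum>i\<in>fsupp c. sc (c i) (F ((\<lambda>(x, y). (f x, g y)) i)))"
    by (rule fs_eval_push[OF assms tmap_push])
  also have "\<dots> = fs_eval sc (\<lambda>(x, y). F (f x, g y)) c"
    by (auto simp: fs_eval_def intro!: sum.cong)
  finally show ?thesis .
qed

lemma finite_fsupp_push:
  assumes "finite A" "\<And>z. c z = (\<Sum>i\<in>{i\<in>A. h i = z}. w i)"
  shows "finite (fsupp c)"
proof -
  have "fsupp c \<subseteq> h ` A"
  proof
    fix z assume "z \<in> fsupp c"
    then have "(\<Sum>i\<in>{i\<in>A. h i = z}. w i) \<noteq> 0" using assms(2) by (simp add: fsupp_def)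
    then obtain i where "i \<in> A" "h i = z" by (metis (mono_tags, lifting) empty_Collect_eq sum.empty)
    then show "z \<in> h ` A" by blast
  qed
  then show ?thesis using assms(1) finite_subset by blast
qed

lemma finite_fsupp_tmap:
  assumes "finite (fsupp c)"
  shows "finite (fsupp (tmap f g c))"
  by (rule finite_fsupp_push[OF assms tmap_push])

lemma fsupp_tmap: "fsupp (tmap f g c) \<subseteq> (\<lambda>(x, y). (f x, g y)) ` fsupp c"
proof
  fix z assume "z \<in> fsupp (tmap f g c)"
  then have ne: "(\<Sum>i\<in>{i \<in> fsupp c. (\<lambda>(x, y). (f x, g y)) i = z}. c i) \<noteq> 0"
    by (simp add: fsupp_def tmap_push)
  have "{i \<in> fsupp c. (\<lambda>(x, y). (f x, g y)) i = z} \<noteq> {}"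
  proof
    assume "{i \<in> fsupp c. (\<lambda>(x, y). (f x, g y)) i = z} = {}"
    then show False using ne by (simp only: sum.empty) simp
  qed
  then show "z \<in> (\<lambda>(x, y). (f x, g y)) ` fsupp c" by blast
qed

lemma fs_eval_pairs: "fs_eval sc (\<lambda>(x, y). F x y) c = (\<Sum>(x, y)\<in>fsupp c. sc (c (x, y)) (F x y))"
  unfolding fs_eval_def by (simp add: split_beta)

lemma fs_eval_pairs_mult: "fs_eval (*) (\<lambda>(x, y). F x y) c = (\<Sum>(x, y)\<in>fsupp c. c (x, y) * F x y)"
  unfolding fs_eval_def by (simp add: split_beta)

section \<open>Bilinear maps factor through tensor products\<close>

lemma fs_eval_scale_add_zero:
  assumes "module sR" "finite (fsupp x) \<and> fs_eval sR F x = 0" "finite (fsupp y) \<and> fs_eval sR F y = 0"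
  shows "finite (fsupp (fs_scale r x + y)) \<and> fs_eval sR F (fs_scale r x + y) = 0"
  using assms by (simp add: finite_fsupp_intros fs_eval_add fs_eval_scale module.scale_zero_right)

lemma fs_eval_teq:
  assumes sR: "module sR"
  and F_bilinear: "\<And>m m' n. m\<in>M \<Longrightarrow> m'\<in>M \<Longrightarrow> n\<in>N \<Longrightarrow> F (m+m', n) = F (m,n) + F (m',n)"
    "\<And>m n n'. m\<in>M \<Longrightarrow> n\<in>N \<Longrightarrow> n'\<in>N \<Longrightarrow> F (m, n+n') = F (m,n) + F (m,n')"
    "\<And>r m n. m\<in>M \<Longrightarrow> n\<in>N \<Longrightarrow> F (sM r m, n) = sR r (F (m,n))"
    "\<And>r m n. m\<in>M \<Longrightarrow> n\<in>N \<Longrightarrow> F (m, sN r n) = sR r (F (m,n))"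
  and t: "teq sM sN M N c d" and fc: "finite (fsupp c)" and fd: "finite (fsupp d)"
  shows "fs_eval sR F c = fs_eval sR F d"
proof -
  have rel: "finite (fsupp x) \<and> fs_eval sR F x = 0" if "x \<in> tens_rel sM sN M N" for x
    using that unfolding tens_rel_def
    by (elim UnE CollectE exE conjE)
       (simp_all add: finite_fsupp_intros fs_eval_diff[OF sR] fs_eval_delta[OF sR] fs_eval_scale[OF sR] F_bilinear)
  have span: "finite (fsupp x) \<and> fs_eval sR F x = 0" if "x \<in> module.span fs_scale (tens_rel sM sN M N)" for x
    apply (rule module.span_induct_alt[OF module_fs that])
    subgoal by (simp add: fs_eval_def)
    subgoal using rel fs_eval_scale_add_zero[OF sR] by blast
    done
  have "fs_eval sR F (c - d) = 0" using span t unfolding teq_def kspan_span by blast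
  then show ?thesis using fs_eval_diff[OF sR fc fd] by simp
qed

lemma fs_eval_teq3:
  assumes sR: "module sR"
  and F_trilinear: "\<And>x x' y z. F (x + x', y, z) = F (x, y, z) + F (x', y, z)"
    "\<And>x y y' z. F (x, y + y', z) = F (x, y, z) + F (x, y', z)"
    "\<And>x y z z'. F (x, y, z + z') = F (x, y, z) + F (x, y, z')"
    "\<And>r x y z. F (s r x, y, z) = sR r (F (x, y, z))"
    "\<And>r x y z. F (x, s r y, z) = sR r (F (x, y, z))"
    "\<And>r x y z. F (x, y, s r z) = sR r (F (x, y, z))"
  and t: "teq3 s c d" and fc: "finite (fsupp c)" and fd: "finite (fsupp d)"
  shows "fs_eval sR F c = fs_eval sR F d"
proof -
  have rel: "finite (fsupp w) \<and> fs_eval sR F w = 0" if "w \<in> tens3_rel s" for w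
    using that unfolding tens3_rel_def
    by (elim UnE CollectE exE conjE)
       (simp_all add: finite_fsupp_intros fs_eval_diff[OF sR] fs_eval_delta[OF sR] fs_eval_scale[OF sR] F_trilinear)
  have span: "finite (fsupp x) \<and> fs_eval sR F x = 0" if "x \<in> module.span fs_scale (tens3_rel s)" for x
    apply (rule module.span_induct_alt[OF module_fs that])
    subgoal by (simp add: fs_eval_def)
    subgoal using rel fs_eval_scale_add_zero[OF sR] by blast
    done
  have "fs_eval sR F (c - d) = 0" using span t unfolding teq3_def kspan_span by blast
  then show ?thesis using fs_eval_diff[OF sR fc fd] by simp
qed

section \<open>Tensors over a finitely generated projective module\<close>

lemma teq_zero_if_teq_double: "teq sM sN M N a (a + a) \<Longrightarrow> teq sM sN M N a 0"
  unfolding teq_def kspan_span using module.span_neg[OF module_fs] by fastforce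

lemma teq_delta_zero_left: "n \<in> N \<Longrightarrow> 0 \<in> M \<Longrightarrow> teq sM sN M N (fs_delta (0, n)) 0"
  by (rule teq_zero_if_teq_double) (use teq_delta_add_left[of 0 M 0 n N sM sN] in simp)

lemma teq_delta_zero_right: "m \<in> M \<Longrightarrow> 0 \<in> N \<Longrightarrow> teq sM sN M N (fs_delta (m, 0)) 0"
  by (rule teq_zero_if_teq_double) (use teq_delta_add_right[of m M 0 N 0 sM sN] in simp)

lemma teq_delta_sum_left:
  "teq sM sN UNIV UNIV (fs_delta (\<Sum>i\<in>I. x i, y)) (\<Sum>i\<in>I. fs_delta (x i, y))"
proof (induct I rule: infinite_finite_induct)
  case (insert j F)
  have "teq sM sN UNIV UNIV (fs_delta (x j + (\<Sum>i\<in>F. x i), y)) (fs_delta (x j, y) + fs_delta (\<Sum>i\<in>F. x i, y))"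
    by (rule teq_delta_add_left) auto
  also have "teq sM sN UNIV UNIV \<dots> (fs_delta (x j, y) + (\<Sum>i\<in>F. fs_delta (x i, y)))"
    by (rule teq_add[OF teq_refl insert(3)])
  finally show ?case by (simp only: sum.insert[OF insert(1,2)])
qed (use teq_delta_zero_left[where M=UNIV and N=UNIV and n=y and sM=sM and sN=sN] in \<open>simp_all add: zero_fun_def\<close>)

lemma teq_delta_sum_right:
  "teq sM sN UNIV UNIV (fs_delta (x, \<Sum>i\<in>I. y i)) (\<Sum>i\<in>I. fs_delta (x, y i))"
proof (induct I rule: infinite_finite_induct)
  case (insert j F)
  have "teq sM sN UNIV UNIV (fs_delta (x, y j + (\<Sum>i\<in>F. y i))) (fs_delta (x, y j) + fs_delta (x, \<Sum>i\<in>F. y i))"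
    by (rule teq_delta_add_right) auto
  also have "teq sM sN UNIV UNIV \<dots> (fs_delta (x, y j) + (\<Sum>i\<in>F. fs_delta (x, y i)))"
    by (rule teq_add[OF teq_refl insert(3)])
  finally show ?case by (simp only: sum.insert[OF insert(1,2)])
qed (use teq_delta_zero_right[where M=UNIV and N=UNIV and m=x and sM=sM and sN=sN] in \<open>simp_all add: zero_fun_def\<close>)

lemma fs_eq_sum_delta:
  assumes fc: "finite (fsupp (c :: 'a \<Rightarrow> 'k::comm_ring_1))"
  shows "c = (\<Sum>z\<in>fsupp c. fs_scale (c z) (fs_delta z))"
proof (rule ext)
  fix x
  have "(\<Sum>z\<in>fsupp c. fs_scale (c z) (fs_delta z)) x = (\<Sum>z\<in>fsupp c. if z = x then c z else 0)"
    unfolding sum_apply_fun by (intro sum.cong) (auto simp: fs_scale_def fs_delta_def)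
  also have "\<dots> = c x" using sum.delta[OF fc, of x c] by (auto simp: fsupp_def)
  finally show "c x = (\<Sum>z\<in>fsupp c. fs_scale (c z) (fs_delta z)) x" by simp
qed

lemma teq_delta_dual_basis_expansion:
  assumes "module s" "\<And>x. x = (\<Sum>i<n. s (f i x) (e i))"
  shows "teq s s UNIV UNIV (fs_delta z) (\<Sum>i<n. fs_delta (e i, (case z of (x, y) \<Rightarrow> s (f i x) y)))"
proof -
  obtain x y where z: "z = (x, y)" by (cases z)
  have "teq s s UNIV UNIV (fs_delta (x, y)) (fs_delta (\<Sum>i<n. s (f i x) (e i), y))"
    using assms(2)[of x] by (simp add: teq_refl)
  also have "teq s s UNIV UNIV (fs_delta (\<Sum>i<n. s (f i x) (e i), y)) (\<Sum>i<n. fs_delta (s (f i x) (e i), y))"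
    by (rule teq_delta_sum_left)
  also have "teq s s UNIV UNIV (\<Sum>i<n. fs_delta (s (f i x) (e i), y)) (\<Sum>i<n. fs_scale (f i x) (fs_delta (e i, y)))"
    by (rule teq_sum) (rule teq_delta_scale_left, auto)
  also have "teq s s UNIV UNIV (\<Sum>i<n. fs_scale (f i x) (fs_delta (e i, y))) (\<Sum>i<n. fs_delta (e i, s (f i x) y))"
    by (rule teq_sum) (rule teq_sym, rule teq_delta_scale_right, auto)
  finally show ?thesis unfolding z by simp
qed

lemma teq_dual_basis_expansion:
  assumes s: "module s" and b: "\<And>x. x = (\<Sum>i<n. s (f i x) (e i))" and fc: "finite (fsupp c)"
  shows "teq s s UNIV UNIV c (\<Sum>i<n. fs_delta (e i, fs_eval s (\<lambda>(x, y). s (f i x) y) c))"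
proof -
  let ?G = "\<lambda>i z. (case z of (x, y) \<Rightarrow> s (f i x) y)"
  have eqX: "(\<Sum>z\<in>fsupp c. fs_scale (c z) (fs_delta z)) = c" by (rule fs_eq_sum_delta[OF fc, symmetric])
  have "teq s s UNIV UNIV c (\<Sum>z\<in>fsupp c. fs_scale (c z) (fs_delta z))"
    by (simp only: eqX teq_refl)
  also have "teq s s UNIV UNIV (\<Sum>z\<in>fsupp c. fs_scale (c z) (fs_delta z))
      (\<Sum>z\<in>fsupp c. fs_scale (c z) (\<Sum>i<n. fs_delta (e i, ?G i z)))"
    by (rule teq_sum, rule teq_scale, rule teq_delta_dual_basis_expansion[OF s b])
  also have "(\<Sum>z\<in>fsupp c. fs_scale (c z) (\<Sum>i<n. fs_delta (e i, ?G i z)))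
      = (\<Sum>i<n. \<Sum>z\<in>fsupp c. fs_scale (c z) (fs_delta (e i, ?G i z)))"
    by (simp only: fs_scale_sum sum.swap[of _ "fsupp c"])
  also have "teq s s UNIV UNIV (\<Sum>i<n. \<Sum>z\<in>fsupp c. fs_scale (c z) (fs_delta (e i, ?G i z)))
      (\<Sum>i<n. \<Sum>z\<in>fsupp c. fs_delta (e i, s (c z) (?G i z)))"
    by (rule teq_sum, rule teq_sum, rule teq_sym, rule teq_delta_scale_right, auto)
  also have "teq s s UNIV UNIV (\<Sum>i<n. \<Sum>z\<in>fsupp c. fs_delta (e i, s (c z) (?G i z)))
      (\<Sum>i<n. fs_delta (e i, \<Sum>z\<in>fsupp c. s (c z) (?G i z)))"
    by (rule teq_sum, rule teq_sym, rule teq_delta_sum_right)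
  also have "(\<Sum>i<n. fs_delta (e i, \<Sum>z\<in>fsupp c. s (c z) (?G i z)))
     = (\<Sum>i<n. fs_delta (e i, fs_eval s (\<lambda>(x, y). s (f i x) y) c))"
    by (simp only: fs_eval_def)
  finally show ?thesis .
qed

lemma teq_by_dual_basis:
  assumes s: "module s" and b: "\<And>x. x = (\<Sum>i<n. s (f i x) (e i))"
    and fc: "finite (fsupp c)" and fd: "finite (fsupp d)"
    and eq: "\<And>i. i < n \<Longrightarrow> fs_eval s (\<lambda>(x, y). s (f i x) y) c = fs_eval s (\<lambda>(x, y). s (f i x) y) d"
  shows "teq s s UNIV UNIV c d"
proof -
  have eqs: "(\<Sum>i<n. fs_delta (e i, fs_eval s (\<lambda>(x, y). s (f i x) y) c)) = (\<Sum>i<n. fs_delta (e i, fs_eval s (\<lambda>(x, y). s (f i x) y) d))"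
    using eq by (intro sum.cong) auto
  show ?thesis
    by (rule teq_trans[OF teq_dual_basis_expansion[OF s b fc, unfolded eqs] teq_sym[OF teq_dual_basis_expansion[OF s b fd]]])
qed

section \<open>Sweedler calculus\<close>

lemma tmult_push:
  "tmult c d z = (\<Sum>i\<in>{i \<in> fsupp c \<times> fsupp d. (\<lambda>(p, q). (fst p * fst q, snd p * snd q)) i = z}.
                    (\<lambda>(p, q). c p * d q) i)"
proof -
  obtain u v where z: "z = (u, v)" by (cases z)
  show ?thesis
    unfolding z tmult_def prod.case by (rule sum.cong) (auto simp: fsupp_def)
qed

definition left_integral :: "('k::comm_ring_1 \<Rightarrow> 'h::ring_1 \<Rightarrow> 'h) \<Rightarrow> ('h \<Rightarrow> 'k) \<Rightarrow> 'h \<Rightarrow> bool" where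
  "left_integral s eps t \<longleftrightarrow> (\<forall>a. a * t = s (eps a) t)"

definition right_integral :: "('k::comm_ring_1 \<Rightarrow> 'h::ring_1 \<Rightarrow> 'h) \<Rightarrow> ('h \<Rightarrow> 'k) \<Rightarrow> 'h \<Rightarrow> bool" where
  "right_integral s eps t \<longleftrightarrow> (\<forall>a. t * a = s (eps a) t)"

locale hopf_alg =
  fixes s :: "'k::comm_ring_1 \<Rightarrow> 'h::ring_1 \<Rightarrow> 'h"
    and D :: "'h \<Rightarrow> ('h \<times> 'h \<Rightarrow> 'k)"
    and eps :: "'h \<Rightarrow> 'k"
    and S :: "'h \<Rightarrow> 'h"
  assumes hopf: "hopf_algebra s D eps S"
begin

lemma scale_module: "module s"
  using hopf unfolding hopf_algebra_def k_algebra_def by blast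

lemma mult_scale_left: "s r x * y = s r (x * y)" and mult_scale_right: "x * s r y = s r (x * y)"
  using hopf unfolding hopf_algebra_def k_algebra_def by metis+

lemma finite_fsupp_D: "finite (fsupp (D a))"
  using hopf unfolding hopf_algebra_def by blast

lemma D_scale: "teq s s UNIV UNIV (D (s r a)) (fs_scale r (D a))"
  and D_mult: "teq s s UNIV UNIV (D (a * b)) (tmult (D a) (D b))"
  using hopf unfolding hopf_algebra_def by blast+

lemma coassoc: "teq3 s
          (\<lambda>(u, v, w). \<Sum>x\<in>{x. D a (x, w) \<noteq> 0}. D a (x, w) * D x (u, v))
          (\<lambda>(u, v, w). \<Sum>y\<in>{y. D a (u, y) \<noteq> 0}. D a (u, y) * D y (v, w))"
  using hopf unfolding hopf_algebra_def by blast

lemma eps_hom: "module_hom s (*) eps"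
  and eps_mult: "eps (a * b) = eps a * eps b" and eps_one: "eps 1 = 1"
  and counit_left: "(\<Sum>(x, y)\<in>fsupp (D a). s (D a (x, y) * eps x) y) = a"
  and counit_right: "(\<Sum>(x, y)\<in>fsupp (D a). s (D a (x, y) * eps y) x) = a"
  and S_hom: "module_hom s s S"
  and antipode_left: "(\<Sum>(x, y)\<in>fsupp (D a). s (D a (x, y)) (S x * y)) = s (eps a) 1"
  and antipode_right: "(\<Sum>(x, y)\<in>fsupp (D a). s (D a (x, y)) (x * S y)) = s (eps a) 1"
  using hopf unfolding hopf_algebra_def by blast+

lemma eps_add: "eps (x + y) = eps x + eps y" and eps_scale: "eps (s r x) = r * eps x"
  using eps_hom unfolding module_hom_iff by auto

lemma S_add: "S (x + y) = S x + S y" and S_scale: "S (s r x) = s r (S x)"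
  using S_hom unfolding module_hom_iff by auto

lemmas scale_right_distrib = module.scale_right_distrib[OF scale_module]
  and scale_left_distrib = module.scale_left_distrib[OF scale_module]
  and scale_scale = module.scale_scale[OF scale_module]
  and scale_one = module.scale_one[OF scale_module]

definition sweedler :: "('h \<Rightarrow> 'h \<Rightarrow> 'h) \<Rightarrow> 'h \<Rightarrow> 'h" where
  "sweedler F a = fs_eval s (\<lambda>(x, y). F x y) (D a)"

definition k_bilinear :: "('h \<Rightarrow> 'h \<Rightarrow> 'h) \<Rightarrow> bool" where
  "k_bilinear F \<longleftrightarrow> (\<forall>x x' y. F (x + x') y = F x y + F x' y) \<and> (\<forall>x y y'. F x (y + y') = F x y + F x y')
     \<and> (\<forall>r x y. F (s r x) y = s r (F x y)) \<and> (\<forall>r x y. F x (s r y) = s r (F x y))"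

definition k_linear :: "('h \<Rightarrow> 'h) \<Rightarrow> bool" where
  "k_linear L \<longleftrightarrow> (\<forall>x y. L (x + y) = L x + L y) \<and> (\<forall>r x. L (s r x) = s r (L x))"

definition k_trilinear :: "('h \<Rightarrow> 'h \<Rightarrow> 'h \<Rightarrow> 'h) \<Rightarrow> bool" where
  "k_trilinear G \<longleftrightarrow> (\<forall>x x' y z. G (x + x') y z = G x y z + G x' y z)
     \<and> (\<forall>x y y' z. G x (y + y') z = G x y z + G x y' z)
     \<and> (\<forall>x y z z'. G x y (z + z') = G x y z + G x y z')
     \<and> (\<forall>r x y z. G (s r x) y z = s r (G x y z))
     \<and> (\<forall>r x y z. G x (s r y) z = s r (G x y z))
     \<and> (\<forall>r x y z. G x y (s r z) = s r (G x y z))"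

lemma k_linear_module_hom: "k_linear L \<Longrightarrow> module_hom s s L"
  unfolding k_linear_def module_hom_iff using scale_module by blast

lemma sweedler_linear: "k_linear L \<Longrightarrow> L (sweedler F a) = sweedler (\<lambda>x y. L (F x y)) a"
  unfolding sweedler_def by (subst fs_eval_hom[OF k_linear_module_hom]) (auto intro!: fs_eval_cong)

lemma sweedler_fadd: "sweedler (\<lambda>x y. F x y + G x y) a = sweedler F a + sweedler G a"
  unfolding sweedler_def fs_eval_def by (simp add: case_prod_beta scale_right_distrib sum.distrib)

lemma sweedler_fscale: "sweedler (\<lambda>x y. s r (F x y)) a = s r (sweedler F a)"
  unfolding sweedler_def fs_eval_def by (simp add: case_prod_beta module.scale_sum_right[OF scale_module] scale_scale mult.commute)

lemma fs_eval_teq_bilinear: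
  assumes "k_bilinear F" "teq s s UNIV UNIV c d" "finite (fsupp c)" "finite (fsupp d)"
  shows "fs_eval s (\<lambda>(x, y). F x y) c = fs_eval s (\<lambda>(x, y). F x y) d"
  using assms(1) by (intro fs_eval_teq[OF scale_module _ _ _ _ assms(2-4)]) (auto simp: k_bilinear_def)

lemma sweedler_scale: "k_bilinear F \<Longrightarrow> sweedler F (s r a) = s r (sweedler F a)"
  unfolding sweedler_def
  by (subst fs_eval_teq_bilinear[OF _ D_scale]) (auto simp: finite_fsupp_D finite_fsupp_scale fs_eval_scale[OF scale_module])

lemma fs_eval_tmult:
  assumes "finite (fsupp c)" "finite (fsupp d)"
  shows "fs_eval s G (tmult c d) = (\<Sum>p\<in>fsupp c. \<Sum>q\<in>fsupp d. s (c p * d q) (G (fst p * fst q, snd p * snd q)))"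
proof -
  have "fs_eval s G (tmult c d) = (\<Sum>i\<in>fsupp c \<times> fsupp d. s ((\<lambda>(p, q). c p * d q) i)
           (G ((\<lambda>(p, q). (fst p * fst q, snd p * snd q)) i)))"
    by (rule fs_eval_push[OF scale_module _ tmult_push]) (use assms in auto)
  also have "\<dots> = (\<Sum>p\<in>fsupp c. \<Sum>q\<in>fsupp d. s (c p * d q) (G (fst p * fst q, snd p * snd q)))"
    by (simp only: sum.cartesian_product) (simp add: split_beta)
  finally show ?thesis .
qed

lemma finite_tmult: "finite (fsupp c) \<Longrightarrow> finite (fsupp d) \<Longrightarrow> finite (fsupp (tmult c d))"
  by (rule finite_fsupp_push[OF _ tmult_push]) auto

lemma sweedler_mult:
  assumes "k_bilinear F"
  shows "sweedler F (a * b) = sweedler (\<lambda>x y. sweedler (\<lambda>x' y'. F (x * x') (y * y')) b) a"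
proof -
  have "sweedler F (a * b) = fs_eval s (\<lambda>(x, y). F x y) (tmult (D a) (D b))"
    unfolding sweedler_def by (rule fs_eval_teq_bilinear[OF assms D_mult finite_fsupp_D finite_tmult[OF finite_fsupp_D finite_fsupp_D]])
  also have "\<dots> = (\<Sum>p\<in>fsupp (D a). \<Sum>q\<in>fsupp (D b). s (D a p * D b q) (F (fst p * fst q) (snd p * snd q)))"
    by (simp add: fs_eval_tmult finite_fsupp_D)
  also have "\<dots> = sweedler (\<lambda>x y. sweedler (\<lambda>x' y'. F (x * x') (y * y')) b) a"
    unfolding sweedler_def fs_eval_def
    by (intro sum.cong refl) (auto simp: module.scale_sum_right[OF scale_module] scale_scale case_prod_beta)
  finally show ?thesis .
qed

lemma sweedler_swap: "sweedler (\<lambda>x y. sweedler (\<lambda>u v. K x y u v) b) a = sweedler (\<lambda>u v. sweedler (\<lambda>x y. K x y u v) a) b"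
  unfolding sweedler_def fs_eval_def
  by (simp add: case_prod_beta module.scale_sum_right[OF scale_module] scale_scale mult.commute sum.swap[of _ "fsupp (D a)"])

lemma sweedler_counit_left: "sweedler (\<lambda>x y. s (eps x) y) a = a"
  using counit_left[of a] unfolding sweedler_def fs_eval_def by (simp add: case_prod_beta scale_scale)

lemma sweedler_counit_right: "sweedler (\<lambda>x y. s (eps y) x) a = a"
  using counit_right[of a] unfolding sweedler_def fs_eval_def by (simp add: case_prod_beta scale_scale)

lemma sweedler_antipode_left: "sweedler (\<lambda>x y. S x * y) a = s (eps a) 1"
  using antipode_left[of a] unfolding sweedler_def fs_eval_def by (simp add: case_prod_beta)

lemma sweedler_antipode_right: "sweedler (\<lambda>x y. x * S y) a = s (eps a) 1"
  using antipode_right[of a] unfolding sweedler_def fs_eval_def by (simp add: case_prod_beta)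

lemma finite_D_column: "finite {x. D a (x, w) \<noteq> 0}"
  by (rule finite_subset[OF _ finite_imageI[OF finite_fsupp_D[of a], of fst]]) (force simp: fsupp_def)

lemma finite_D_row: "finite {y. D a (u, y) \<noteq> 0}"
  by (rule finite_subset[OF _ finite_imageI[OF finite_fsupp_D[of a], of snd]]) (force simp: fsupp_def)

lemma coassoc_left_push:
  "(case z of (u, v, w) \<Rightarrow> \<Sum>x\<in>{x. D a (x, w) \<noteq> 0}. D a (x, w) * D x (u, v))
   = (\<Sum>i\<in>{i \<in> Sigma (fsupp (D a)) (\<lambda>p. fsupp (D (fst p))). (\<lambda>(p, q). (fst q, snd q, snd p)) i = z}.
        (\<lambda>(p, q). D a p * D (fst p) q) i)"
proof -
  obtain u v w where z: "z = (u, v, w)" by (cases z) auto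
  let ?X = "{x. D a (x, w) \<noteq> 0}"
  let ?X' = "{x. D a (x, w) \<noteq> 0 \<and> D x (u, v) \<noteq> 0}"
  have "(\<Sum>x\<in>?X. D a (x, w) * D x (u, v)) = (\<Sum>x\<in>?X'. D a (x, w) * D x (u, v))"
    by (rule sum.mono_neutral_right[OF finite_D_column]) auto
  also have "\<dots> = (\<Sum>i\<in>(\<lambda>x. ((x, w), (u, v))) ` ?X'. (\<lambda>(p, q). D a p * D (fst p) q) i)"
    by (subst sum.reindex) (auto simp: inj_on_def)
  also have "(\<lambda>x. ((x, w), (u, v))) ` ?X' = {i \<in> Sigma (fsupp (D a)) (\<lambda>p. fsupp (D (fst p))). (\<lambda>(p, q). (fst q, snd q, snd p)) i = z}"
    unfolding z by (auto simp: fsupp_def image_iff)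
  finally show ?thesis unfolding z by simp
qed

lemma coassoc_right_push:
  "(case z of (u, v, w) \<Rightarrow> \<Sum>y\<in>{y. D a (u, y) \<noteq> 0}. D a (u, y) * D y (v, w))
   = (\<Sum>i\<in>{i \<in> Sigma (fsupp (D a)) (\<lambda>p. fsupp (D (snd p))). (\<lambda>(p, q). (fst p, fst q, snd q)) i = z}.
        (\<lambda>(p, q). D a p * D (snd p) q) i)"
proof -
  obtain u v w where z: "z = (u, v, w)" by (cases z) auto
  let ?X = "{y. D a (u, y) \<noteq> 0}"
  let ?X' = "{y. D a (u, y) \<noteq> 0 \<and> D y (v, w) \<noteq> 0}"
  have "(\<Sum>y\<in>?X. D a (u, y) * D y (v, w)) = (\<Sum>y\<in>?X'. D a (u, y) * D y (v, w))"
    by (rule sum.mono_neutral_right[OF finite_D_row]) auto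
  also have "\<dots> = (\<Sum>i\<in>(\<lambda>y. ((u, y), (v, w))) ` ?X'. (\<lambda>(p, q). D a p * D (snd p) q) i)"
    by (subst sum.reindex) (auto simp: inj_on_def)
  also have "(\<lambda>y. ((u, y), (v, w))) ` ?X' = {i \<in> Sigma (fsupp (D a)) (\<lambda>p. fsupp (D (snd p))). (\<lambda>(p, q). (fst p, fst q, snd q)) i = z}"
    unfolding z by (auto simp: fsupp_def image_iff)
  finally show ?thesis unfolding z by simp
qed

lemma fs_eval_coassoc_left:
  "fs_eval s (\<lambda>(u, v, w). G u v w) (\<lambda>(u, v, w). \<Sum>x\<in>{x. D a (x, w) \<noteq> 0}. D a (x, w) * D x (u, v))
   = sweedler (\<lambda>x w. sweedler (\<lambda>u v. G u v w) x) a"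
proof -
  have "fs_eval s (\<lambda>(u, v, w). G u v w) (\<lambda>(u, v, w). \<Sum>x\<in>{x. D a (x, w) \<noteq> 0}. D a (x, w) * D x (u, v))
      = (\<Sum>i\<in>Sigma (fsupp (D a)) (\<lambda>p. fsupp (D (fst p))).
          s ((\<lambda>(p, q). D a p * D (fst p) q) i) ((\<lambda>(u, v, w). G u v w) ((\<lambda>(p, q). (fst q, snd q, snd p)) i)))"
    by (rule fs_eval_push[OF scale_module finite_SigmaI[OF finite_fsupp_D finite_fsupp_D] coassoc_left_push])
  also have "\<dots> = (\<Sum>p\<in>fsupp (D a). \<Sum>q\<in>fsupp (D (fst p)). s (D a p * D (fst p) q) (G (fst q) (snd q) (snd p)))"
    by (subst sum.Sigma[OF finite_fsupp_D]) (auto simp: finite_fsupp_D split_beta)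
  also have "\<dots> = sweedler (\<lambda>x w. sweedler (\<lambda>u v. G u v w) x) a"
    unfolding sweedler_def fs_eval_def
    by (intro sum.cong refl) (auto simp: module.scale_sum_right[OF scale_module] scale_scale split_beta)
  finally show ?thesis .
qed

lemma fs_eval_coassoc_right:
  "fs_eval s (\<lambda>(u, v, w). G u v w) (\<lambda>(u, v, w). \<Sum>y\<in>{y. D a (u, y) \<noteq> 0}. D a (u, y) * D y (v, w))
   = sweedler (\<lambda>u y. sweedler (\<lambda>v w. G u v w) y) a"
proof -
  have "fs_eval s (\<lambda>(u, v, w). G u v w) (\<lambda>(u, v, w). \<Sum>y\<in>{y. D a (u, y) \<noteq> 0}. D a (u, y) * D y (v, w))
      = (\<Sum>i\<in>Sigma (fsupp (D a)) (\<lambda>p. fsupp (D (snd p))).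
          s ((\<lambda>(p, q). D a p * D (snd p) q) i) ((\<lambda>(u, v, w). G u v w) ((\<lambda>(p, q). (fst p, fst q, snd q)) i)))"
    by (rule fs_eval_push[OF scale_module finite_SigmaI[OF finite_fsupp_D finite_fsupp_D] coassoc_right_push])
  also have "\<dots> = (\<Sum>p\<in>fsupp (D a). \<Sum>q\<in>fsupp (D (snd p)). s (D a p * D (snd p) q) (G (fst p) (fst q) (snd q)))"
    by (subst sum.Sigma[OF finite_fsupp_D]) (auto simp: finite_fsupp_D split_beta)
  also have "\<dots> = sweedler (\<lambda>u y. sweedler (\<lambda>v w. G u v w) y) a"
    unfolding sweedler_def fs_eval_def
    by (intro sum.cong refl) (auto simp: module.scale_sum_right[OF scale_module] scale_scale split_beta)
  finally show ?thesis .
qed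

lemma sweedler_coassoc:
  assumes "k_trilinear G"
  shows "sweedler (\<lambda>x w. sweedler (\<lambda>u v. G u v w) x) a = sweedler (\<lambda>u y. sweedler (\<lambda>v w. G u v w) y) a"
proof -
  have fin: "finite (Sigma (fsupp (D a)) (\<lambda>p. fsupp (D (f p))))" for f :: "'h \<times> 'h \<Rightarrow> 'h"
    by (rule finite_SigmaI[OF finite_fsupp_D finite_fsupp_D])
  have "fs_eval s (\<lambda>(u, v, w). G u v w) (\<lambda>(u, v, w). \<Sum>x\<in>{x. D a (x, w) \<noteq> 0}. D a (x, w) * D x (u, v))
      = fs_eval s (\<lambda>(u, v, w). G u v w) (\<lambda>(u, v, w). \<Sum>y\<in>{y. D a (u, y) \<noteq> 0}. D a (u, y) * D y (v, w))"
    by (rule fs_eval_teq3[OF scale_module _ _ _ _ _ _ coassoc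
          finite_fsupp_push[OF fin coassoc_left_push] finite_fsupp_push[OF fin coassoc_right_push]])
       (use assms in \<open>auto simp: k_trilinear_def\<close>)
  then show ?thesis
    unfolding fs_eval_coassoc_left fs_eval_coassoc_right .
qed

lemma sweedler_fscale_mult_left: "sweedler (\<lambda>x y. s (r * g x y) (F x y)) a = s r (sweedler (\<lambda>x y. s (g x y) (F x y)) a)"
  by (simp add: sweedler_fscale[symmetric] scale_scale)

lemma sweedler_fscale_mult_right: "sweedler (\<lambda>x y. s (g x y * r) (F x y)) a = s r (sweedler (\<lambda>x y. s (g x y) (F x y)) a)"
  by (simp add: sweedler_fscale[symmetric] scale_scale mult.commute)

lemmas hopf_algebra_simps = sweedler_fscale_mult_left sweedler_fscale_mult_right sweedler_fadd
  sweedler_fscale scale_right_distrib scale_left_distrib scale_scale mult_scale_left mult_scale_right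
  S_add S_scale eps_add eps_scale distrib_left distrib_right mult.assoc mult.commute mult.left_commute

lemma k_linear_S: "k_linear S" unfolding k_linear_def by (simp add: S_add S_scale)

lemma sweedler_cong: "(\<And>x y. F x y = G x y) \<Longrightarrow> sweedler F a = sweedler G a"
  by (metis ext)

lemma sweedler_counit_left_linear: "k_linear L \<Longrightarrow> sweedler (\<lambda>x y. s (eps x) (L y)) a = L a"
  using sweedler_linear[of L "\<lambda>x y. s (eps x) y" a] sweedler_counit_left[of a] by (simp add: k_linear_def)

lemma sweedler_counit_right_linear: "k_linear L \<Longrightarrow> sweedler (\<lambda>x y. s (eps y) (L x)) a = L a"
  using sweedler_linear[of L "\<lambda>x y. s (eps y) x" a] sweedler_counit_right[of a] by (simp add: k_linear_def)

lemma k_linear_mult_left: "k_linear (\<lambda>t. z * t)"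
  and k_linear_mult_right: "k_linear (\<lambda>t. t * z)"
  and k_linear_mult_both: "k_linear (\<lambda>t. z * t * w)"
  unfolding k_linear_def by (simp_all add: hopf_algebra_simps)

lemma sweedler_mult_antipode_right:
  "sweedler (\<lambda>u' v'. sweedler (\<lambda>u v. z * u * u' * S v' * S v) x) y = s (eps (x * y)) z"
proof -
  have inner: "sweedler (\<lambda>u' v'. z * u * u' * S v' * S v) y = s (eps y) (z * u * S v)" for u v
  proof -
    have "sweedler (\<lambda>u' v'. z * u * u' * S v' * S v) y = z * u * sweedler (\<lambda>u' v'. u' * S v') y * S v"
      using sweedler_linear[OF k_linear_mult_both[of "z * u" "S v"], of "\<lambda>u' v'. u' * S v'" y]
      by (simp add: mult.assoc)
    then show ?thesis
      by (simp add: sweedler_antipode_right mult_scale_left mult_scale_right)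
  qed
  have "sweedler (\<lambda>u' v'. sweedler (\<lambda>u v. z * u * u' * S v' * S v) x) y
      = sweedler (\<lambda>u v. sweedler (\<lambda>u' v'. z * u * u' * S v' * S v) y) x"
    by (rule sweedler_swap)
  also have "\<dots> = sweedler (\<lambda>u v. s (eps y) (z * u * S v)) x"
    by (intro sweedler_cong inner)
  also have "\<dots> = s (eps y) (z * sweedler (\<lambda>u v. u * S v) x)"
    using sweedler_linear[OF k_linear_mult_left[of z], of "\<lambda>u v. u * S v" x]
    by (simp add: sweedler_fscale mult.assoc)
  also have "\<dots> = s (eps (x * y)) z"
    by (simp add: sweedler_antipode_right mult_scale_right scale_scale eps_mult mult.commute)
  finally show ?thesis .
qed

lemma sweedler_mult_antipode_left: "sweedler (\<lambda>p q. S p * q * z) (x * y) = s (eps x * eps y) z"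
proof -
  have "sweedler (\<lambda>p q. S p * q * z) (x * y) = sweedler (\<lambda>p q. S p * q) (x * y) * z"
    using sweedler_linear[OF k_linear_mult_right[of z], of "\<lambda>p q. S p * q" "x * y"] by simp
  then show ?thesis
    by (simp add: sweedler_antipode_left eps_mult mult_scale_left)
qed

text \<open>Both \<open>a \<otimes> b \<mapsto> S(ab)\<close> and \<open>a \<otimes> b \<mapsto> S(b) S(a)\<close> are convolution inverses
  of the multiplication; the chain below is the uniqueness of inverses spelled out in Sweedler sums.\<close>

lemma S_mult: "S (a * b) = S b * S a"
proof -
  define T where "T x1 y1 u y12 w v = S (x1 * y1) * u * y12 * S w * S v" for x1 y1 u y12 w v
  have "S (a * b) = sweedler (\<lambda>x y. s (eps y) (S x)) (a * b)"
    by (rule sweedler_counit_right_linear[OF k_linear_S, symmetric])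
  also have "\<dots> = sweedler (\<lambda>x1 x2. sweedler (\<lambda>y1 y2. s (eps (x2 * y2)) (S (x1 * y1))) b) a"
    by (rule sweedler_mult) (simp add: k_bilinear_def hopf_algebra_simps)
  also have "\<dots> = sweedler (\<lambda>x1 x2. sweedler (\<lambda>y1 y2. sweedler (\<lambda>u' v'. sweedler (\<lambda>u v. T x1 y1 u u' v' v) x2) y2) b) a"
    unfolding T_def by (simp only: sweedler_mult_antipode_right)
  also have "\<dots> = sweedler (\<lambda>x1 x2. sweedler (\<lambda>y w. sweedler (\<lambda>y1 y12. sweedler (\<lambda>u v. T x1 y1 u y12 w v) x2) y) b) a"
    by (intro sweedler_cong sweedler_coassoc[symmetric]) (simp add: k_trilinear_def T_def hopf_algebra_simps)
  also have "\<dots> = sweedler (\<lambda>x1 x2. sweedler (\<lambda>y w. sweedler (\<lambda>u v. sweedler (\<lambda>y1 y12. T x1 y1 u y12 w v) y) x2) b) a"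
    by (intro sweedler_cong sweedler_swap)
  also have "\<dots> = sweedler (\<lambda>x1 x2. sweedler (\<lambda>u v. sweedler (\<lambda>y w. sweedler (\<lambda>y1 y12. T x1 y1 u y12 w v) y) b) x2) a"
    by (intro sweedler_cong sweedler_swap)
  also have "\<dots> = sweedler (\<lambda>x v. sweedler (\<lambda>x1 u. sweedler (\<lambda>y w. sweedler (\<lambda>y1 y12. T x1 y1 u y12 w v) y) b) x) a"
    by (rule sweedler_coassoc[symmetric, of "\<lambda>x1 u v. sweedler (\<lambda>y w. sweedler (\<lambda>y1 y12. T x1 y1 u y12 w v) y) b"])
       (simp add: k_trilinear_def T_def hopf_algebra_simps)
  also have "\<dots> = sweedler (\<lambda>x v. sweedler (\<lambda>y w. sweedler (\<lambda>x1 u. sweedler (\<lambda>y1 y12. T x1 y1 u y12 w v) y) x) b) a"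
    by (intro sweedler_cong sweedler_swap)
  also have "\<dots> = sweedler (\<lambda>x v. sweedler (\<lambda>y w. sweedler (\<lambda>p q. S p * q * (S w * S v)) (x * y)) b) a"
  proof (intro sweedler_cong)
    fix x v y w
    have "sweedler (\<lambda>p q. S p * q * (S w * S v)) (x * y) =
        sweedler (\<lambda>x1 x2. sweedler (\<lambda>y1 y2. S (x1 * y1) * (x2 * y2) * (S w * S v)) y) x"
      by (rule sweedler_mult) (simp add: k_bilinear_def hopf_algebra_simps)
    then show "sweedler (\<lambda>x1 u. sweedler (\<lambda>y1 y12. T x1 y1 u y12 w v) y) x = sweedler (\<lambda>p q. S p * q * (S w * S v)) (x * y)"
      by (simp add: T_def mult.assoc)
  qed
  also have "\<dots> = sweedler (\<lambda>x v. sweedler (\<lambda>y w. s (eps x * eps y) (S w * S v)) b) a"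
    by (simp only: sweedler_mult_antipode_left)
  also have "\<dots> = sweedler (\<lambda>x v. s (eps x) (sweedler (\<lambda>y w. s (eps y) (S w)) b * S v)) a"
  proof (intro sweedler_cong)
    fix x v
    have "sweedler (\<lambda>y w. s (eps x * eps y) (S w * S v)) b = s (eps x) (sweedler (\<lambda>y w. s (eps y) (S w * S v)) b)"
      by (simp add: sweedler_fscale[symmetric] scale_scale)
    also have "sweedler (\<lambda>y w. s (eps y) (S w * S v)) b = sweedler (\<lambda>y w. s (eps y) (S w)) b * S v"
      using sweedler_linear[OF k_linear_mult_right[of "S v"], of "\<lambda>y w. s (eps y) (S w)" b] by (simp add: mult_scale_left)
    finally show "sweedler (\<lambda>y w. s (eps x * eps y) (S w * S v)) b = s (eps x) (sweedler (\<lambda>y w. s (eps y) (S w)) b * S v)" .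
  qed
  also have "\<dots> = sweedler (\<lambda>x v. s (eps x) (S b * S v)) a"
    by (simp only: sweedler_counit_left_linear[OF k_linear_S])
  also have "\<dots> = S b * S a"
    using sweedler_counit_left_linear[of "\<lambda>t. S b * S t" a] by (simp add: k_linear_def S_add S_scale distrib_left mult_scale_right)
  finally show ?thesis .
qed

section \<open>Integrals and separability\<close>

lemma left_integral_sweedler_absorb:
  assumes "left_integral s eps t" and f: "module_hom s (*) f"
  shows "sweedler (\<lambda>u v. sweedler (\<lambda>p q. s (f (u * p)) (S q)) t * S v * w) x
    = s (eps x) (sweedler (\<lambda>p q. s (f p) (S q)) t * w)"
proof -
  have fadd: "f (y + z) = f y + f z" and fscale: "f (s r y) = r * f y" for y z r
    using f unfolding module_hom_iff by auto
  have "sweedler (\<lambda>u v. sweedler (\<lambda>p q. s (f (u * p)) (S q)) t * S v * w) x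
      = sweedler (\<lambda>u v. sweedler (\<lambda>p q. s (f (u * p)) (S (v * q)) * w) t) x"
  proof (intro sweedler_cong)
    fix u v
    have "sweedler (\<lambda>p q. s (f (u * p)) (S q)) t * S v * w = sweedler (\<lambda>p q. s (f (u * p)) (S q) * (S v * w)) t"
      using sweedler_linear[OF k_linear_mult_right[of "S v * w"], of "\<lambda>p q. s (f (u * p)) (S q)" t]
      by (simp add: mult.assoc)
    then show "sweedler (\<lambda>p q. s (f (u * p)) (S q)) t * S v * w = sweedler (\<lambda>p q. s (f (u * p)) (S (v * q)) * w) t"
      by (simp add: S_mult mult_scale_left mult.assoc)
  qed
  also have "\<dots> = sweedler (\<lambda>p q. s (f p) (S q) * w) (x * t)"
    by (rule sweedler_mult[symmetric]) (simp add: k_bilinear_def hopf_algebra_simps fadd fscale)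
  also have "\<dots> = s (eps x) (sweedler (\<lambda>p q. s (f p) (S q) * w) t)"
    using assms(1) unfolding left_integral_def
    by (simp add: sweedler_scale k_bilinear_def hopf_algebra_simps fadd fscale)
  also have "sweedler (\<lambda>p q. s (f p) (S q) * w) t = sweedler (\<lambda>p q. s (f p) (S q)) t * w"
    using sweedler_linear[OF k_linear_mult_right[of w], of "\<lambda>p q. s (f p) (S q)" t] by simp
  finally show ?thesis .
qed

text \<open>For a left integral \<open>t\<close> the element \<open>t\<^sub>1 \<otimes> S(t\<^sub>2)\<close> satisfies
  \<open>a t\<^sub>1 \<otimes> S(t\<^sub>2) = t\<^sub>1 \<otimes> S(t\<^sub>2) a\<close>, stated here after applying a functional
  \<open>f\<close> to the first factor.\<close>

lemma left_integral_casimir: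
  assumes "left_integral s eps t" and f: "module_hom s (*) f"
  shows "sweedler (\<lambda>x y. s (f (a * x)) (S y)) t = sweedler (\<lambda>x y. s (f x) (S y)) t * a"
proof -
  have fadd: "f (x + y) = f x + f y" and fscale: "f (s r x) = r * f x" for x y r
    using f unfolding module_hom_iff by auto
  define Phi where "Phi x = sweedler (\<lambda>u v. s (f (x * u)) (S v)) t" for x
  have Phi_linear: "k_linear Phi"
    unfolding k_linear_def Phi_def by (simp add: hopf_algebra_simps fadd fscale)
  have "Phi a = sweedler (\<lambda>x y. s (eps y) (Phi x)) a"
    by (rule sweedler_counit_right_linear[OF Phi_linear, symmetric])
  also have "\<dots> = sweedler (\<lambda>x y. sweedler (\<lambda>u v. Phi x * S u * v) y) a"
  proof (intro sweedler_cong)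
    fix x y
    have "sweedler (\<lambda>u v. Phi x * S u * v) y = Phi x * sweedler (\<lambda>u v. S u * v) y"
      using sweedler_linear[OF k_linear_mult_left[of "Phi x"], of "\<lambda>u v. S u * v" y] by (simp add: mult.assoc)
    then show "s (eps y) (Phi x) = sweedler (\<lambda>u v. Phi x * S u * v) y"
      by (simp add: sweedler_antipode_left mult_scale_right)
  qed
  also have "\<dots> = sweedler (\<lambda>x w. sweedler (\<lambda>u v. Phi u * S v * w) x) a"
    by (rule sweedler_coassoc[symmetric, of "\<lambda>u v w. Phi u * S v * w"])
       (simp add: k_trilinear_def hopf_algebra_simps Phi_linear[unfolded k_linear_def])
  also have "\<dots> = sweedler (\<lambda>x w. s (eps x) (sweedler (\<lambda>p q. s (f p) (S q)) t * w)) a"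
    unfolding Phi_def by (intro sweedler_cong left_integral_sweedler_absorb[OF assms])
  also have "\<dots> = sweedler (\<lambda>p q. s (f p) (S q)) t * a"
    by (rule sweedler_counit_left_linear) (simp add: k_linear_def hopf_algebra_simps)
  finally show ?thesis unfolding Phi_def .
qed

lemma separable_imp_normalized_right_integral:
  assumes "separable_algebra s"
  obtains t where "right_integral s eps t" and "eps t = 1"
proof -
  obtain e where fin_e: "finite (fsupp e)"
    and mult_e: "(\<Sum>(x, y)\<in>fsupp e. s (e (x, y)) (x * y)) = 1"
    and central_e: "\<And>a. teq s s UNIV UNIV (tmap (\<lambda>x. a * x) id e) (tmap id (\<lambda>y. y * a) e)"
    using assms unfolding separable_algebra_def by blast
  define t where "t = fs_eval s (\<lambda>(x, y). s (eps x) y) e"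
  have "t * b = s (eps b) t" for b
  proof -
    have "fs_eval s (\<lambda>(x, y). s (eps x) y) (tmap (\<lambda>x. b * x) id e)
        = fs_eval s (\<lambda>(x, y). s (eps x) y) (tmap id (\<lambda>y. y * b) e)"
      by (rule fs_eval_teq[OF scale_module _ _ _ _ central_e finite_fsupp_tmap[OF fin_e] finite_fsupp_tmap[OF fin_e]])
         (auto simp: eps_add eps_scale scale_right_distrib scale_left_distrib scale_scale mult.commute)
    moreover have "fs_eval s (\<lambda>(x, y). s (eps x) y) (tmap (\<lambda>x. b * x) id e) = s (eps b) t"
      unfolding fs_eval_tmap[OF scale_module fin_e] t_def fs_eval_fun_scale[OF scale_module, symmetric]
      by (intro fs_eval_cong) (auto simp: eps_mult scale_scale mult.commute)
    moreover have "fs_eval s (\<lambda>(x, y). s (eps x) y) (tmap id (\<lambda>y. y * b) e) = t * b"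
      unfolding fs_eval_tmap[OF scale_module fin_e] t_def fs_eval_hom[OF k_linear_module_hom[OF k_linear_mult_right[of b]]]
      by (intro fs_eval_cong) (auto simp: mult_scale_left)
    ultimately show ?thesis by simp
  qed
  then have "right_integral s eps t"
    unfolding right_integral_def by blast
  moreover have "eps t = 1"
  proof -
    have "eps t = fs_eval (*) (\<lambda>(x, y). eps x * eps y) e"
      unfolding t_def fs_eval_hom[OF eps_hom] by (intro fs_eval_cong) (auto simp: eps_scale)
    also have "\<dots> = eps (fs_eval s (\<lambda>(x, y). x * y) e)"
      unfolding fs_eval_hom[OF eps_hom] by (intro fs_eval_cong) (auto simp: eps_mult)
    also have "fs_eval s (\<lambda>(x, y). x * y) e = 1"
      using mult_e by (simp add: fs_eval_pairs)
    finally show ?thesis by (simp add: eps_one)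
  qed
  ultimately show ?thesis by (rule that)
qed

lemma normalized_left_integral_imp_separable:
  assumes "fg_projective s" and "left_integral s eps t" and "eps t = 1"
  shows "separable_algebra s"
proof -
  obtain n :: nat and e f where f_hom: "\<And>i. i < n \<Longrightarrow> module_hom s (*) (f i)"
    and dual_basis: "\<And>x. x = (\<Sum>i<n. s (f i x) (e i))"
    using assms(1) unfolding fg_projective_def by blast
  define c where "c = tmap id S (D t)"
  have fin_c: "finite (fsupp c)"
    unfolding c_def by (rule finite_fsupp_tmap[OF finite_fsupp_D])
  have "(\<Sum>(x, y)\<in>fsupp c. s (c (x, y)) (x * y)) = sweedler (\<lambda>x y. x * S y) t"
    unfolding c_def fs_eval_pairs[symmetric] fs_eval_tmap[OF scale_module finite_fsupp_D] sweedler_def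
    by simp
  also have "\<dots> = 1"
    by (simp add: sweedler_antipode_right assms(3) scale_one)
  finally have mult_c: "(\<Sum>(x, y)\<in>fsupp c. s (c (x, y)) (x * y)) = 1" .
  have "teq s s UNIV UNIV (tmap (\<lambda>x. a * x) id c) (tmap id (\<lambda>y. y * a) c)" for a
  proof (rule teq_by_dual_basis[OF scale_module dual_basis finite_fsupp_tmap[OF fin_c] finite_fsupp_tmap[OF fin_c]])
    fix i assume i: "i < n"
    have "fs_eval s (\<lambda>(x, y). s (f i x) y) (tmap (\<lambda>x. a * x) id c) = sweedler (\<lambda>x y. s (f i (a * x)) (S y)) t"
      unfolding c_def fs_eval_tmap[OF scale_module finite_fsupp_tmap[OF finite_fsupp_D]]
        fs_eval_tmap[OF scale_module finite_fsupp_D] sweedler_def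
      by simp
    also have "\<dots> = sweedler (\<lambda>x y. s (f i x) (S y)) t * a"
      by (rule left_integral_casimir[OF assms(2) f_hom[OF i]])
    also have "\<dots> = sweedler (\<lambda>x y. s (f i x) (S y) * a) t"
      by (rule sweedler_linear[OF k_linear_mult_right])
    also have "\<dots> = fs_eval s (\<lambda>(x, y). s (f i x) y) (tmap id (\<lambda>y. y * a) c)"
      unfolding c_def fs_eval_tmap[OF scale_module finite_fsupp_tmap[OF finite_fsupp_D]]
        fs_eval_tmap[OF scale_module finite_fsupp_D] sweedler_def
      by (simp add: mult_scale_left)
    finally show "fs_eval s (\<lambda>(x, y). s (f i x) y) (tmap (\<lambda>x. a * x) id c) =
        fs_eval s (\<lambda>(x, y). s (f i x) y) (tmap id (\<lambda>y. y * a) c)" .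
  qed
  then show ?thesis
    unfolding separable_algebra_def using fin_c mult_c by blast
qed

section \<open>Left norms\<close>

lemma counit_fs_eval_contraction:
  "eps (fs_eval s (\<lambda>(h, q). s (q p) h) N) = (\<Sum>(h, q)\<in>fsupp N. N (h, q) * eps h * q p)"
proof -
  have "eps (fs_eval s (\<lambda>(h, q). s (q p) h) N) = fs_eval (*) (\<lambda>(h, q). q p * eps h) N"
    unfolding fs_eval_hom[OF eps_hom] by (intro fs_eval_cong) (auto simp: eps_scale)
  then show ?thesis
    by (simp add: fs_eval_pairs_mult mult.commute mult.left_commute)
qed

lemma left_norm_mult_counit_one:
  assumes "left_norm s sP eps psi N" and "eps c = 1"
  shows "teq s fun_scale UNIV (kdual sP) (tmap (\<lambda>h. c * h) id N) N"
proof -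
  have fin_N: "finite (fsupp N)" and supp_N: "fsupp N \<subseteq> UNIV \<times> kdual sP"
    and norm_N: "\<And>b. (\<Sum>(h, q)\<in>fsupp N. N (h, q) * q (psi (b * h))) = eps b"
    using assms(1) unfolding left_norm_def by blast+
  define N' where "N' = tmap (\<lambda>h. c * h) id N"
  have fin_N': "finite (fsupp N')"
    unfolding N'_def by (rule finite_fsupp_tmap[OF fin_N])
  have supp_N': "fsupp N' \<subseteq> UNIV \<times> kdual sP"
    using fsupp_tmap[of "\<lambda>h. c * h" id N] supp_N unfolding N'_def by auto
  have "(\<Sum>(h, q)\<in>fsupp N'. N' (h, q) * q (psi (b * h))) = eps b" for b
  proof -
    have "(\<Sum>(h, q)\<in>fsupp N'. N' (h, q) * q (psi (b * h))) = fs_eval (*) (\<lambda>(h, q). q (psi (b * h))) N'"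
      by (simp add: fs_eval_pairs_mult)
    also have "\<dots> = fs_eval (*) (\<lambda>(h, q). q (psi ((b * c) * h))) N"
      unfolding N'_def fs_eval_tmap[OF module_mult fin_N]
      by (intro fs_eval_cong) (auto simp: mult.assoc)
    also have "\<dots> = eps (b * c)"
      using norm_N[of "b * c"] by (simp add: fs_eval_pairs_mult)
    finally show ?thesis by (simp add: eps_mult assms(2))
  qed
  then show ?thesis
    using assms(1) fin_N' supp_N' unfolding N'_def left_norm_def by blast
qed

text \<open>The contraction \<open>t\<close> is fixed by left multiplication with \<open>a - \<epsilon>(a) + 1\<close>, an element
  of counit 1, because the norm is.\<close>

lemma left_norm_contraction_left_integral:
  assumes "left_norm s sP eps psi N"
  shows "left_integral s eps (fs_eval s (\<lambda>(h, q). s (q p) h) N)"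
  unfolding left_integral_def
proof
  fix a
  have fin_N: "finite (fsupp N)"
    using assms unfolding left_norm_def by blast
  define t where "t = fs_eval s (\<lambda>(h, q). s (q p) h) N"
  define a' where "a' = a - s (eps a) 1 + 1"
  have "eps a' = 1"
    unfolding a'_def by (simp add: module_hom.diff[OF eps_hom] eps_add eps_scale eps_one)
  then have "fs_eval s (\<lambda>(h, q). s (q p) h) (tmap (\<lambda>h. a' * h) id N) = t"
    unfolding t_def
    by (intro fs_eval_teq[OF scale_module _ _ _ _ left_norm_mult_counit_one[OF assms] finite_fsupp_tmap[OF fin_N] fin_N])
       (auto simp: scale_right_distrib scale_left_distrib scale_scale fun_scale_def mult.commute)
  moreover have "fs_eval s (\<lambda>(h, q). s (q p) h) (tmap (\<lambda>h. a' * h) id N) = a' * t"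
    unfolding fs_eval_tmap[OF scale_module fin_N] t_def
      fs_eval_hom[OF k_linear_module_hom[OF k_linear_mult_left[of a']]]
    by (intro fs_eval_cong) (auto simp: mult_scale_right)
  ultimately show "a * t = s (eps a) t"
    unfolding a'_def by (simp add: algebra_simps mult_scale_left)
qed

end

lemma left_norm_counit_contraction_kdual:
  assumes "module sP" and "fsupp N \<subseteq> UNIV \<times> kdual sP"
  shows "(\<lambda>x. \<Sum>(h, q)\<in>fsupp N. N (h, q) * eps h * q x) \<in> kdual sP"
proof -
  have q_hom: "module_hom sP (*) q" if "(h, q) \<in> fsupp N" for h q
    using assms(2) that unfolding kdual_def by blast
  show ?thesis
    unfolding kdual_def module_hom_iff
  proof (intro CollectI conjI allI assms(1) module_mult)
    fix x y
    show "(\<Sum>(h, q)\<in>fsupp N. N (h, q) * eps h * q (x + y))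
        = (\<Sum>(h, q)\<in>fsupp N. N (h, q) * eps h * q x) + (\<Sum>(h, q)\<in>fsupp N. N (h, q) * eps h * q y)"
      unfolding sum.distrib[symmetric]
      by (intro sum.cong refl) (auto simp: module_hom.add[OF q_hom] algebra_simps)
  next
    fix r x
    show "(\<Sum>(h, q)\<in>fsupp N. N (h, q) * eps h * q (sP r x)) = r * (\<Sum>(h, q)\<in>fsupp N. N (h, q) * eps h * q x)"
      unfolding sum_distrib_left
      by (intro sum.cong refl) (auto simp: module_hom.scale[OF q_hom] algebra_simps)
  qed
qed

lemma left_norm_eval_right_integral:
  assumes "module_hom sH sP psi" and "left_norm sH sP eps psi N" and "right_integral sH eps t"
  shows "(\<Sum>(h, q)\<in>fsupp N. N (h, q) * eps h * q (psi t)) = eps t"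
proof -
  have supp_N: "fsupp N \<subseteq> UNIV \<times> kdual sP"
    and norm_N: "(\<Sum>(h, q)\<in>fsupp N. N (h, q) * q (psi (t * h))) = eps t"
    using assms(2) unfolding left_norm_def by blast+
  have "q (psi (t * h)) = eps h * q (psi t)" if "(h, q) \<in> fsupp N" for h q
  proof -
    have "module_hom sP (*) q"
      using supp_N that unfolding kdual_def by blast
    then show ?thesis
      using assms(3) unfolding right_integral_def
      by (simp add: module_hom.scale[OF assms(1)] module_hom.scale)
  qed
  then have "(\<Sum>(h, q)\<in>fsupp N. N (h, q) * eps h * q (psi t))
      = (\<Sum>(h, q)\<in>fsupp N. N (h, q) * q (psi (t * h)))"
    by (intro sum.cong refl) (clarsimp simp: mult.assoc)
  then show ?thesis
    using norm_N by simp
qed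

theorem theorem6p2:
  fixes sH :: "'k::comm_ring_1 \<Rightarrow> 'h::ring_1 \<Rightarrow> 'h"
    and D :: "'h \<Rightarrow> ('h \<times> 'h \<Rightarrow> 'k)"
    and eps :: "'h \<Rightarrow> 'k"
    and S :: "'h \<Rightarrow> 'h"
    and sP :: "'k \<Rightarrow> 'p::ab_group_add \<Rightarrow> 'p"
    and psi :: "'h \<Rightarrow> 'p"
    and N :: "'h \<times> ('p \<Rightarrow> 'k) \<Rightarrow> 'k"
  assumes "hopf_algebra sH D eps S"
    and "fg_projective sH"
    and "invertible_module sP"
    and "frobenius_hom sH sP psi"
    and "\<forall>a. teq sH sP UNIV UNIV (tmap id psi (D a)) (fs_delta (1, psi a))"
    and "left_norm sH sP eps psi N"
  shows "separable_algebra sH \<longleftrightarrow>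
           morita_invertible sP (\<lambda>x. \<Sum>(h, q)\<in>fsupp N. N (h, q) * eps h * q x)"
proof -
  interpret hopf_alg sH D eps S by (rule hopf_alg.intro) (rule assms(1))
  have psi_hom: "module_hom sH sP psi"
    using assms(4) unfolding frobenius_hom_def by blast
  have q0_dual: "(\<lambda>x. \<Sum>(h, q)\<in>fsupp N. N (h, q) * eps h * q x) \<in> kdual sP"
    using assms(3,6) unfolding invertible_module_def fg_projective_def left_norm_def
    by (blast intro: left_norm_counit_contraction_kdual)
  show ?thesis
  proof
    assume "separable_algebra sH"
    then obtain t where "right_integral sH eps t" and "eps t = 1"
      by (rule separable_imp_normalized_right_integral)
    then have "(\<Sum>(h, q)\<in>fsupp N. N (h, q) * eps h * q (psi t)) = 1"
      by (simp add: left_norm_eval_right_integral[OF psi_hom assms(6)])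
    then show "morita_invertible sP (\<lambda>x. \<Sum>(h, q)\<in>fsupp N. N (h, q) * eps h * q x)"
      unfolding morita_invertible_def using q0_dual by blast
  next
    assume "morita_invertible sP (\<lambda>x. \<Sum>(h, q)\<in>fsupp N. N (h, q) * eps h * q x)"
    then obtain p where "(\<Sum>(h, q)\<in>fsupp N. N (h, q) * eps h * q p) = 1"
      unfolding morita_invertible_def by blast
    then have "eps (fs_eval sH (\<lambda>(h, q). sH (q p) h) N) = 1"
      by (simp add: counit_fs_eval_contraction)
    then show "separable_algebra sH"
      by (rule normalized_left_integral_imp_separable[OF assms(2) left_norm_contraction_left_integral[OF assms(6)]])
  qed
qed

end
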